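(* Fix integers $k\geq 2$ and $n>r\geq 3$, and integers $s_0,\dots,s_{k-1}$ with $n\geq s_i\geq r+1$ for all $i$. If $n \nrightarrow (s_0,\dots,s_{k-1})^{r}$, then \[ 2^n \nrightarrow (s_0+1,\dots,s_{k-1}+1,\underbrace{r+2,\dots,r+2}_{\eta(r)\text{ terms}})^{r+1}, \] where $\eta(r)=1$ if $r=3$, $\eta(r)=2$ if $r>3$ is even, and $\eta(r)=3$ if $r>3$ is odd. That is, there is a colouring of the $(r+1)$-subsets of $\{0,\dots,2^n-1\}$ with $k+\eta(r)$ colours such that for each $i<k$ no set of size $s_i+1$ is monochromatic in colour $i$, and no set of size $r+2$ is monochromatic in any of the colours $k,\dots,k+\eta(r)-1$.
   Context: For $m\in\mathbb N$ write $[m]=\{0,\dots,m-1\}$ and $\binom{S}{r}$ for the set of $r$-element subsets of $S$. Given $k\geq 2$, $n>r\geq1$, an $r$-subset $k$-colouring of $[n]$ is a function $f:\binom{[n]}{r}\to[k]$; a set $X\subset[n]$ is monochromatic in colour $i$ if $f(T)=i$ for all $T\in\binom{X}{r}$. For integers $s_0,\dots,s_{k-1}$ with $n\geq s_i>r$, the relation $n\to(s_0,\dots,s_{k-1})^r$ means that for every $f:\binom{[n]}{r}\to[k]$ there is a colour $i$ and a subset of $[n]$ of size $s_i$ monochromatic in colour $i$; $n\nrightarrow(\dots)^r$ is its negation. $(s)_k^r$ abbreviates $(s,\dots,s)^r$ with $k$ entries. *)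

theory Defs
  imports Main
begin

definition monochromatic :: "(nat set \<Rightarrow> nat) \<Rightarrow> nat \<Rightarrow> nat set \<Rightarrow> nat \<Rightarrow> bool" where
  "monochromatic f r X i \<longleftrightarrow> (\<forall>T. T \<subseteq> X \<and> card T = r \<longrightarrow> f T = i)"

definition arrows :: "nat \<Rightarrow> (nat \<Rightarrow> nat) \<Rightarrow> nat \<Rightarrow> nat \<Rightarrow> bool" where
  "arrows n s k r \<longleftrightarrow>
     (\<forall>f. (\<forall>T. T \<subseteq> {..<n} \<and> card T = r \<longrightarrow> f T < k) \<longrightarrow>
        (\<exists>i<k. \<exists>X. X \<subseteq> {..<n} \<and> card X = s i \<and> monochromatic f r X i))"

definition eta :: "nat \<Rightarrow> nat" where
  "eta r = (if r = 3 then 1 else if even r then 2 else 3)"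

end

theory Submission
  imports Defs
begin

text \<open>Stepping up in the manner of Erdos and Hajnal. For distinct \<open>a, b < 2^n\<close> let
  \<open>delta a b < n\<close> be the highest bit in which they differ. Along \<open>a\<^sub>0 < \<dots> < a\<^sub>m\<close>
  consecutive values \<open>delta a\<^sub>i a\<^sub>i\<^sub>+\<^sub>1\<close> are distinct, and \<open>delta a\<^sub>i a\<^sub>j\<close> is the largest
  of the consecutive values between them. An \<open>(r+1)\<close>-set whose sequence of \<open>r\<close> consecutive
  values has a local maximum (a peak), except when it has a peak at position 1 and another one,
  gets one of two new colours according to the parity of its first peak; every other set gets the
  old colour of its set of values. If a set is monochromatic in an old colour, no window of
  \<open>r+2\<close> consecutive points has a peak, so its whole sequence falls and then rises; its values
  are then distinct, and any \<open>r\<close> of them are the values of one of its \<open>(r+1)\<close>-subsets, giving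
  a monochromatic set for the original colouring that is one element smaller. An \<open>(r+2)\<close>-set is
  never monochromatic in a new colour: deleting its first, second, second-to-last and last point
  produces either two different parities or a subset with two peaks.\<close>

section \<open>Highest differing bit\<close>

text \<open>The highest bit in which \<open>a\<close> and \<open>b\<close> differ; junk value 0 when \<open>a = b\<close>.\<close>

definition delta :: "nat \<Rightarrow> nat \<Rightarrow> nat" where
  "delta a b = (LEAST j. a div 2 ^ Suc j = b div 2 ^ Suc j)"

lemma div_power2_eq_mono:
  assumes "a div 2 ^ j = b div 2 ^ j" "j \<le> i"
  shows "a div 2 ^ i = b div (2::nat) ^ i"
proof -
  have "(2::nat) ^ i = 2 ^ j * 2 ^ (i - j)"
    using assms(2) by (simp flip: power_add)
  then show ?thesis
    using assms(1) by (simp add: div_mult2_eq)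
qed

lemma delta_le_iff: "delta a b \<le> j \<longleftrightarrow> a div 2 ^ Suc j = b div 2 ^ Suc j"
proof
  have "a div 2 ^ Suc (a + b) = b div 2 ^ Suc (a + b)"
  proof -
    have "(2::nat) ^ a \<le> 2 ^ Suc (a + b)" "(2::nat) ^ b \<le> 2 ^ Suc (a + b)"
      by (rule power_increasing; simp)+
    then have "a < 2 ^ Suc (a + b)" "b < 2 ^ Suc (a + b)"
      using less_exp[of a] less_exp[of b] by linarith+
    then show ?thesis by (simp only: div_less)
  qed
  then have "a div 2 ^ Suc (delta a b) = b div 2 ^ Suc (delta a b)"
    unfolding delta_def by (rule LeastI)
  then show "a div 2 ^ Suc j = b div 2 ^ Suc j" if "delta a b \<le> j"
    using div_power2_eq_mono[of a "Suc (delta a b)" b "Suc j"] that by simp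
qed (simp add: delta_def Least_le)

lemma delta_max:
  assumes "a \<le> b" "b \<le> c"
  shows "delta a c = max (delta a b) (delta b c)"
proof -
  have key: "delta a c \<le> j \<longleftrightarrow> delta a b \<le> j \<and> delta b c \<le> j" for j
  proof -
    have "a div 2 ^ Suc j \<le> b div 2 ^ Suc j" "b div 2 ^ Suc j \<le> c div 2 ^ Suc j"
      using assms by (simp_all only: div_le_mono)
    then show ?thesis unfolding delta_le_iff by linarith
  qed
  have "delta a c \<le> max (delta a b) (delta b c)"
    using key by simp
  moreover have "max (delta a b) (delta b c) \<le> delta a c"
    using key[of "delta a c"] by simp
  ultimately show ?thesis by (rule order.antisym)
qed

lemma div_power2_delta_neq:
  assumes "a \<noteq> b"
  shows "a div 2 ^ delta a b \<noteq> b div 2 ^ delta a b"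
proof (cases "delta a b")
  case (Suc j)
  then have "a div 2 ^ Suc j \<noteq> b div 2 ^ Suc j"
    using delta_le_iff[of a b j] by simp
  then show ?thesis using Suc by simp
qed (use assms in simp)

lemma delta_neq:
  assumes "a < b" "b < c"
  shows "delta a b \<noteq> delta b c"
proof
  assume eq: "delta a b = delta b c"
  define j where "j = delta a b"
  define x y z where "x = a div 2 ^ j" and "y = b div 2 ^ j" and "z = c div 2 ^ j"
  have "x \<noteq> y" "y \<noteq> z"
    using div_power2_delta_neq[of a b] div_power2_delta_neq[of b c] assms eq
    unfolding x_def y_def z_def j_def by auto
  moreover have "x \<le> y" "y \<le> z"
    using assms unfolding x_def y_def z_def by (simp_all add: div_le_mono)
  moreover have "a div 2 ^ Suc j = b div 2 ^ Suc j" "b div 2 ^ Suc j = c div 2 ^ Suc j"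
    using eq unfolding j_def delta_le_iff[symmetric] by simp_all
  then have "x div 2 = y div 2" "y div 2 = z div 2"
    unfolding x_def y_def z_def by (simp_all only: power_Suc2 div_mult2_eq)
  ultimately show False by linarith
qed

lemma delta_less:
  assumes "a < 2 ^ n" "b < 2 ^ n" "a \<noteq> b"
  shows "delta a b < n"
proof -
  have "n \<noteq> 0" using assms by (cases n) auto
  then have "a div 2 ^ Suc (n - 1) = b div 2 ^ Suc (n - 1)" using assms by simp
  then show ?thesis using \<open>n \<noteq> 0\<close> unfolding delta_le_iff[symmetric] by simp
qed

definition delta_seq :: "(nat \<Rightarrow> nat) \<Rightarrow> nat \<Rightarrow> nat" where
  "delta_seq b l = delta (b l) (b (Suc l))"

lemma delta_eq_Max:
  assumes "mono_on {x..y} b" "x < y"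
  shows "delta (b x) (b y) = (MAX l\<in>{x..<y}. delta_seq b l)"
  using assms
proof (induction y)
  case (Suc y)
  show ?case
  proof (cases "x = y")
    case False
    then have "x < y" using Suc.prems(2) by simp
    have "mono_on {x..y} b"
      using Suc.prems(1) by (rule mono_on_subset) auto
    then have IH: "delta (b x) (b y) = (MAX l\<in>{x..<y}. delta_seq b l)"
      using Suc.IH \<open>x < y\<close> by simp
    have "delta (b x) (b (Suc y)) = max (delta (b x) (b y)) (delta_seq b y)"
      unfolding delta_seq_def using Suc.prems(1) \<open>x < y\<close> by (intro delta_max; auto elim: mono_onD)
    moreover have "{x..<Suc y} = insert y {x..<y}" using \<open>x < y\<close> by auto
    ultimately show ?thesis using IH \<open>x < y\<close> by (simp add: max.commute)
  qed (simp add: delta_seq_def)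
qed simp

lemma delta_eq_local_max:
  assumes "mono_on {x..y} b" "q \<in> {x..<y}"
    and "\<And>l. l \<in> {x..<y} \<Longrightarrow> delta_seq b l \<le> delta_seq b q"
  shows "delta (b x) (b y) = delta_seq b q"
proof -
  have "x < y" using assms(2) by simp
  show ?thesis
    unfolding delta_eq_Max[OF assms(1) \<open>x < y\<close>] by (rule Max_eqI) (use assms in auto)
qed

lemma delta_exceeded_between:
  assumes "strict_mono_on {p..Suc q} b" "p < q"
    and "delta_seq b p = delta_seq b q"
  shows "\<exists>l. p < l \<and> l < q \<and> delta_seq b p < delta_seq b l"
proof (rule ccontr)
  assume "\<not> ?thesis"
  then have "\<And>l. l \<in> {p..<q} \<Longrightarrow> delta_seq b l \<le> delta_seq b p"
    by (metis atLeastLessThan_iff le_eq_less_or_eq not_le)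
  then have "delta (b p) (b q) = delta_seq b q"
    using assms by (subst delta_eq_local_max[of p q b p])
      (auto intro: mono_on_subset[OF strict_mono_on_imp_mono_on[OF assms(1)]])
  moreover have "b p < b q" "b q < b (Suc q)"
    using assms(1,2) by (auto intro: strict_mono_onD)
  ultimately show False using delta_neq unfolding delta_seq_def by blast
qed

section \<open>Enumerating finite sets of naturals\<close>

definition nth_elem :: "nat set \<Rightarrow> nat \<Rightarrow> nat" where
  "nth_elem A i = sorted_list_of_set A ! i"

lemma strict_mono_on_nth_elem:
  assumes "finite A"
  shows "strict_mono_on {..<card A} (nth_elem A)"
  using sorted_wrt_nth_less[OF sorted_list_of_set.strict_sorted_key_list_of_set] assms
  by (auto intro!: strict_mono_onI simp: nth_elem_def)

lemma nth_elem_in: "finite A \<Longrightarrow> i < card A \<Longrightarrow> nth_elem A i \<in> A"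
  unfolding nth_elem_def by (metis nth_mem sorted_list_of_set.length_sorted_key_list_of_set
      sorted_list_of_set.set_sorted_key_list_of_set)

lemma image_nth_elem:
  assumes "finite A"
  shows "nth_elem A ` {..<card A} = A"
proof -
  have "nth_elem A ` {..<card A} = set (sorted_list_of_set A)"
    using \<open>finite A\<close> by (auto simp: nth_elem_def set_conv_nth)
  then show ?thesis using \<open>finite A\<close> by simp
qed

lemma nth_elem_consecutive:
  assumes "finite P" "Suc t < card P" "z \<in> P"
  shows "\<not> (nth_elem P t < z \<and> z < nth_elem P (Suc t))"
proof
  assume between: "nth_elem P t < z \<and> z < nth_elem P (Suc t)"
  obtain a where a: "a < card P" "z = nth_elem P a"
    using image_nth_elem[OF assms(1)] assms(3) by blast
  note mono = strict_mono_on_nth_elem[OF assms(1)]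
  show False
  proof (cases "a \<le> t")
    case True
    then have "z \<le> nth_elem P t" using a assms(2) by (auto intro: strict_mono_on_leD[OF mono])
    then show False using between by simp
  next
    case False
    then have "nth_elem P (Suc t) \<le> z" using a assms(2) by (auto intro: strict_mono_on_leD[OF mono])
    then show False using between by simp
  qed
qed

lemma sorted_list_of_set_strict_mono_image:
  assumes "strict_mono_on A f" "P \<subseteq> A" "finite P"
  shows "sorted_list_of_set (f ` P) = map f (sorted_list_of_set P)"
proof -
  have "inj_on f P"
    using strict_mono_on_imp_inj_on assms(1,2) inj_on_subset by blast
  moreover have "sorted_wrt (<) (map f (sorted_list_of_set P))"
    unfolding sorted_wrt_map
    by (rule sorted_wrt_mono_rel[OF _ sorted_list_of_set.strict_sorted_key_list_of_set])
      (use assms in \<open>auto intro: strict_mono_onD\<close>)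
  ultimately show ?thesis
    using assms(3) by (subst sorted_list_of_set_unique[symmetric]) (auto simp: card_image)
qed

lemma nth_elem_strict_mono_image:
  assumes "strict_mono_on A f" "P \<subseteq> A" "finite P" "i < card P"
  shows "nth_elem (f ` P) i = f (nth_elem P i)"
  using assms by (simp add: nth_elem_def sorted_list_of_set_strict_mono_image)

lemma nth_elem_atLeastLessThan: "i < n - m \<Longrightarrow> nth_elem {m..<n} i = m + i"
  by (simp add: nth_elem_def)

lemma image_skip_lessThan:
  assumes "j < N"
  shows "(\<lambda>i. if i < j then i else Suc i) ` {..<N - 1} = {..<N} - {j}"
proof
  show "{..<N} - {j} \<subseteq> (\<lambda>i. if i < j then i else Suc i) ` {..<N - 1}"
  proof
    fix x assume x: "x \<in> {..<N} - {j}"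
    show "x \<in> (\<lambda>i. if i < j then i else Suc i) ` {..<N - 1}"
    proof (cases "x < j")
      case True then show ?thesis using x assms by force
    next
      case False
      then have "x = (if x - 1 < j then x - 1 else Suc (x - 1))" "x - 1 < N - 1" using x by auto
      then show ?thesis by blast
    qed
  qed
qed (use assms in auto)

lemma image_nth_elem_subset: "finite X \<Longrightarrow> P \<subseteq> {..<card X} \<Longrightarrow> nth_elem X ` P \<subseteq> X"
  using nth_elem_in by blast

lemma card_image_nth_elem: "finite X \<Longrightarrow> P \<subseteq> {..<card X} \<Longrightarrow> card (nth_elem X ` P) = card P"
  by (meson card_image inj_on_subset strict_mono_on_imp_inj_on strict_mono_on_nth_elem)

lemma delta_seq_strict_mono_image:
  assumes "strict_mono_on A f" "P \<subseteq> A" "finite P" "Suc i < card P"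
  shows "delta_seq (nth_elem (f ` P)) i = delta_seq (\<lambda>t. f (nth_elem P t)) i"
  using assms by (simp add: delta_seq_def nth_elem_strict_mono_image)

lemma delta_seq_image_nth_elem:
  assumes "finite X" "P \<subseteq> {..<card X}" "Suc i < card P"
  shows "delta_seq (nth_elem (nth_elem X ` P)) i = delta_seq (\<lambda>t. nth_elem X (nth_elem P t)) i"
  using assms finite_subset
  by (intro delta_seq_strict_mono_image[OF strict_mono_on_nth_elem]) auto

lemma delta_seq_nth_elem_less:
  assumes "finite X" "X \<subseteq> {..<2 ^ n}" "Suc l < card X"
  shows "delta_seq (nth_elem X) l < n"
proof -
  have "nth_elem X l \<in> X" "nth_elem X (Suc l) \<in> X"
    using nth_elem_in[OF assms(1)] assms(3) by simp_all
  then have "nth_elem X l < 2 ^ n" "nth_elem X (Suc l) < 2 ^ n"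
    using assms(2) by auto
  moreover have "nth_elem X l \<noteq> nth_elem X (Suc l)"
    using assms(3) strict_mono_onD[OF strict_mono_on_nth_elem[OF assms(1)], of l "Suc l"] by simp
  ultimately show ?thesis unfolding delta_seq_def by (rule delta_less)
qed

definition merge_at :: "(nat \<Rightarrow> nat) \<Rightarrow> nat \<Rightarrow> nat \<Rightarrow> nat" where
  "merge_at e j i = (if Suc i < j then e i else if Suc i = j then max (e i) (e (Suc i)) else e (Suc i))"

lemma delta_seq_remove:
  assumes "finite A" "j < card A" "Suc (Suc i) < card A"
  shows "delta_seq (nth_elem (A - {nth_elem A j})) i = merge_at (delta_seq (nth_elem A)) j i"
proof -
  define b where "b = nth_elem A"
  define skip where "skip i = (if i < j then i else Suc i)" for i
  define P where "P = skip ` {..<card A - 1}"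
  have b: "strict_mono_on {..<card A} b"
    unfolding b_def using assms(1) by (rule strict_mono_on_nth_elem)
  have skip: "strict_mono_on UNIV skip"
    unfolding skip_def by (rule strict_mono_onI) auto
  have P: "P = {..<card A} - {j}"
    unfolding P_def skip_def using assms(2) by (rule image_skip_lessThan)
  have "A - {b j} = b ` P"
    using image_nth_elem[OF assms(1)] strict_mono_on_imp_inj_on[OF b] assms(2)
    unfolding P b_def by (simp add: inj_on_image_set_diff)
  moreover have "card P = card A - 1" "finite P"
    using assms(2) by (simp_all add: P)
  moreover have "nth_elem P i' = skip i'" if "i' < card A - 1" for i'
    using nth_elem_strict_mono_image[OF skip, of "{..<card A - 1}" i'] that
      nth_elem_atLeastLessThan[of i' "card A - 1" 0]
    by (simp add: P_def lessThan_atLeast0)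
  ultimately have "delta_seq (nth_elem (A - {b j})) i = delta (b (skip i)) (b (skip (Suc i)))"
    using delta_seq_strict_mono_image[OF b, of P i] assms(3) by (simp add: P delta_seq_def)
  moreover have "delta (b i) (b (Suc (Suc i)))
      = max (delta (b i) (b (Suc i))) (delta (b (Suc i)) (b (Suc (Suc i))))"
    using assms(3) by (intro delta_max; auto intro!: strict_mono_on_leD[OF b])
  ultimately show ?thesis
    unfolding merge_at_def delta_seq_def b_def skip_def by auto
qed

section \<open>Peaks\<close>

definition peak :: "(nat \<Rightarrow> nat) \<Rightarrow> nat \<Rightarrow> nat \<Rightarrow> bool" where
  "peak e L j \<longleftrightarrow> 0 < j \<and> Suc j < L \<and> e (j - 1) < e j \<and> e (Suc j) < e j"

definition twin_peaks :: "(nat \<Rightarrow> nat) \<Rightarrow> nat \<Rightarrow> bool" where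
  "twin_peaks e L \<longleftrightarrow> peak e L 1 \<and> (\<exists>q. q \<noteq> 1 \<and> peak e L q)"

definition peaked :: "(nat \<Rightarrow> nat) \<Rightarrow> nat \<Rightarrow> bool" where
  "peaked e L \<longleftrightarrow> (\<exists>j. peak e L j) \<and> \<not> twin_peaks e L"

definition first_peak :: "(nat \<Rightarrow> nat) \<Rightarrow> nat \<Rightarrow> nat" where
  "first_peak e L = (LEAST j. peak e L j)"

text \<open>Shifted so that a first peak at position 1, the only possible one when \<open>r = 3\<close>,
  has parity 0; hence \<open>eta 3 = 1\<close> new colour suffices.\<close>

definition peak_parity :: "(nat \<Rightarrow> nat) \<Rightarrow> nat \<Rightarrow> nat" where
  "peak_parity e L = (first_peak e L + 1) mod 2"

lemma peak_cong:
  assumes "\<And>i. i < L \<Longrightarrow> e i = e' i"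
  shows "peak e L = peak e' L"
proof
  fix j
  show "peak e L j = peak e' L j"
    using assms[of "j - 1"] assms[of j] assms[of "Suc j"] unfolding peak_def
    by (cases "Suc j < L") auto
qed

lemma peaked_cong: "(\<And>i. i < L \<Longrightarrow> e i = e' i) \<Longrightarrow> peaked e L = peaked e' L"
  unfolding peaked_def twin_peaks_def by (simp add: peak_cong[of L e e'])

lemma peak_parity_cong: "(\<And>i. i < L \<Longrightarrow> e i = e' i) \<Longrightarrow> peak_parity e L = peak_parity e' L"
  unfolding peak_parity_def first_peak_def by (simp add: peak_cong[of L e e'])

lemma peak_shift: "peak (\<lambda>i. e (Suc i)) L j \<longleftrightarrow> 0 < j \<and> peak e (Suc L) (Suc j)"
  unfolding peak_def by (cases j) simp_all

lemma peak_iff_peak_Suc: "peak e L j \<longleftrightarrow> peak e (Suc L) j \<and> Suc j < L"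
  unfolding peak_def by linarith

lemma peak_Suc: "peak e L j \<Longrightarrow> peak e (Suc L) j"
  using peak_iff_peak_Suc by blast

lemma not_peak_Suc: "peak e L j \<Longrightarrow> \<not> peak e L (Suc j)"
  unfolding peak_def by simp

lemma peak_first_peak: "peak e L j \<Longrightarrow> peak e L (first_peak e L)"
  unfolding first_peak_def by (rule LeastI)

lemma not_peak_less_first_peak: "j < first_peak e L \<Longrightarrow> \<not> peak e L j"
  unfolding first_peak_def by (rule not_less_Least)

lemma first_peak_eqI: "peak e L p \<Longrightarrow> (\<And>j. j < p \<Longrightarrow> \<not> peak e L j) \<Longrightarrow> first_peak e L = p"
  unfolding first_peak_def by (rule Least_equality) (auto simp: not_less[symmetric])

lemma peakedI: "peak e L j \<Longrightarrow> \<not> peak e L 1 \<Longrightarrow> peaked e L"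
  unfolding peaked_def twin_peaks_def by blast

lemma peaked_if_lone_peak: "peak e L 1 \<Longrightarrow> (\<And>q. q \<noteq> 1 \<Longrightarrow> \<not> peak e L q) \<Longrightarrow> peaked e L"
  unfolding peaked_def twin_peaks_def by blast

lemma ascent_persists:
  assumes "e a < e (Suc a)" "a \<le> b" "Suc b < L"
    and "\<And>q. a < q \<Longrightarrow> q \<le> b \<Longrightarrow> \<not> peak e L q"
    and "\<And>i. Suc i < L \<Longrightarrow> e i \<noteq> e (Suc i)"
  shows "e b < e (Suc b)"
  using assms(2-4)
proof (induction b rule: dec_induct)
  case (step b)
  then have "e b < e (Suc b)" "\<not> peak e L (Suc b)" by simp_all
  then show ?case
    using assms(5)[of "Suc b"] step.prems(1) unfolding peak_def by auto
qed (use assms(1) in simp)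

lemma peaked_shift_if_late_peak:
  assumes "peak e (Suc L) q" "2 < q" "\<not> peak e (Suc L) 2"
  shows "peaked (\<lambda>i. e (Suc i)) L"
proof (rule peakedI)
  show "peak (\<lambda>i. e (Suc i)) L (q - 1)"
    using assms(1,2) by (simp add: peak_shift)
  show "\<not> peak (\<lambda>i. e (Suc i)) L 1"
    using assms(3) by (simp add: peak_shift numeral_2_eq_2)
qed

lemma peaked_drop_first_or_last:
  assumes "3 \<le> r" "peak e (Suc r) p"
  shows "peaked (\<lambda>i. e (Suc i)) r \<or> peaked e r"
proof (cases "peak e (Suc r) 1")
  case peak1: True
  have not_peak2: "\<not> peak e (Suc r) 2"
    using not_peak_Suc[OF peak1] by (simp add: numeral_2_eq_2)
  show ?thesis
  proof (cases "\<exists>q. q \<noteq> 1 \<and> peak e (Suc r) q")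
    case True
    then obtain q where q: "q \<noteq> 1" "peak e (Suc r) q" by blast
    then have "2 < q" using not_peak2 unfolding peak_def by (cases "q = 2") auto
    then show ?thesis using peaked_shift_if_late_peak[OF q(2) _ not_peak2] by blast
  next
    case False
    have "peak e r 1" using peak1 assms(1) peak_iff_peak_Suc[of e r 1] by simp
    then show ?thesis using False peak_Suc by (blast intro: peaked_if_lone_peak)
  qed
next
  case not_peak1: False
  show ?thesis
  proof (cases "peak e (Suc r) 2")
    case False
    have "p \<noteq> 1" "p \<noteq> 2" "0 < p"
      using not_peak1 False assms(2) unfolding peak_def by auto
    then show ?thesis using peaked_shift_if_late_peak[OF assms(2) _ False] by simp
  next
    case True
    show ?thesis
    proof (cases "r = 3")
      case True
      have "peak (\<lambda>i. e (Suc i)) r 1"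
        using \<open>peak e (Suc r) 2\<close> by (simp add: peak_shift numeral_2_eq_2)
      moreover have "\<not> peak (\<lambda>i. e (Suc i)) r q" if "q \<noteq> 1" for q
        using that True unfolding peak_def by auto
      ultimately show ?thesis by (blast intro: peaked_if_lone_peak)
    next
      case False
      then have "peak e r 2" using \<open>peak e (Suc r) 2\<close> assms(1) peak_iff_peak_Suc[of e r 2] by simp
      moreover have "\<not> peak e r 1" using not_peak1 peak_Suc by blast
      ultimately show ?thesis by (blast intro: peakedI)
    qed
  qed
qed

lemma peak_parity_drop_first_neq:
  assumes "peak e (Suc r) p" "\<And>j. j < p \<Longrightarrow> \<not> peak e (Suc r) j" "2 \<le> p" "Suc p < r"
  shows "peak_parity (\<lambda>i. e (Suc i)) r \<noteq> peak_parity e r"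
proof -
  have "first_peak e r = p"
  proof (rule first_peak_eqI)
    show "peak e r p" using assms(1,4) peak_iff_peak_Suc[of e r p] by simp
  qed (use assms(2) peak_Suc in blast)
  moreover have "first_peak (\<lambda>i. e (Suc i)) r = p - 1"
  proof (rule first_peak_eqI)
    show "peak (\<lambda>i. e (Suc i)) r (p - 1)"
      using assms(1,3) by (simp add: peak_shift)
    show "\<not> peak (\<lambda>i. e (Suc i)) r j" if "j < p - 1" for j
      using assms(2)[of "Suc j"] that by (simp add: peak_shift)
  qed
  ultimately show ?thesis
    using assms(3) unfolding peak_parity_def by simp presburger
qed

lemma peaks_at_first_and_last:
  assumes "3 \<le> r" "peak e (Suc r) 1" "peaked e r" "peaked (\<lambda>i. e (Suc i)) r"
    and "peak_parity (\<lambda>i. e (Suc i)) r = peak_parity e r"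
  shows "5 \<le> r" "peak e (Suc r) (r - 1)" "\<And>q. 1 < q \<Longrightarrow> q < r - 1 \<Longrightarrow> \<not> peak e (Suc r) q"
proof -
  have peak1: "peak e r 1" using assms(1,2) peak_iff_peak_Suc[of e r 1] by simp
  have only: "q = 1 \<or> q = r - 1" if "peak e (Suc r) q" for q
  proof (rule ccontr)
    assume q: "\<not> (q = 1 \<or> q = r - 1)"
    then have "peak e r q" using that peak_iff_peak_Suc[of e r q] unfolding peak_def by auto
    then show False using assms(3) peak1 q unfolding peaked_def twin_peaks_def by blast
  qed
  obtain j where "peak (\<lambda>i. e (Suc i)) r j" using assms(4) unfolding peaked_def by blast
  then have j: "0 < j" "peak e (Suc r) (Suc j)" by (simp_all add: peak_shift)
  then have "Suc j = r - 1" using only by force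
  then show last: "peak e (Suc r) (r - 1)" using j(2) by simp
  have "r \<noteq> 3" using not_peak_Suc[OF assms(2)] last by (auto simp: numeral_2_eq_2)
  have "first_peak e r = 1"
    by (rule first_peak_eqI[OF peak1]) (simp add: peak_def)
  moreover have "first_peak (\<lambda>i. e (Suc i)) r = r - 2"
  proof (rule first_peak_eqI)
    show "peak (\<lambda>i. e (Suc i)) r (r - 2)"
      using last assms(1) \<open>r \<noteq> 3\<close> by (simp add: peak_shift Suc_diff_Suc numeral_2_eq_2)
    show "\<not> peak (\<lambda>i. e (Suc i)) r i" if "i < r - 2" for i
      using only[of "Suc i"] that by (auto simp: peak_shift)
  qed
  ultimately have "odd r"
    using assms(1,5) \<open>r \<noteq> 3\<close> unfolding peak_parity_def by simp presburger
  then show "5 \<le> r" using assms(1) \<open>r \<noteq> 3\<close> by presburger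
  show "\<not> peak e (Suc r) q" if "1 < q" "q < r - 1" for q
    using only[of q] that by auto
qed

lemma merge_at_twin_peaks:
  assumes "5 \<le> r" "\<And>i. i < r \<Longrightarrow> e i \<noteq> e (Suc i)"
    and "peak e (Suc r) 1" "peak e (Suc r) (r - 1)"
    and "\<And>q. 1 < q \<Longrightarrow> q < r - 1 \<Longrightarrow> \<not> peak e (Suc r) q"
  shows "twin_peaks (merge_at e 2) r \<or> twin_peaks (merge_at e (r - 1)) r"
proof -
  obtain t where r: "r = t + 5" using assms(1) by (metis add.commute le_Suc_ex)
  have first: "e 0 < e 1" "e 2 < e 1"
    using assms(3) unfolding peak_def by (simp_all add: numeral_2_eq_2)
  have last: "e (t + 3) < e (t + 4)" "e (t + 5) < e (t + 4)"
    using assms(4) unfolding peak_def r by (simp_all add: numeral_eq_Suc)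
  show ?thesis
  proof (cases "e 3 < e 1")
    case True
    have "peak (merge_at e 2) r 1"
      using first True unfolding peak_def merge_at_def r by (simp add: numeral_eq_Suc)
    moreover have "peak (merge_at e 2) r (t + 3)"
      using last unfolding peak_def merge_at_def r by (simp add: numeral_eq_Suc)
    ultimately have "twin_peaks (merge_at e 2) r"
      unfolding twin_peaks_def by (intro conjI exI[of _ "t + 3"]) simp_all
    then show ?thesis ..
  next
    case False
    have ascent: "e i < e (Suc i)" if "2 \<le> i" "i \<le> t + 2" for i
    proof (rule ascent_persists[of e 2 i "Suc r"])
      show "e 2 < e (Suc 2)" using first False by simp
    qed (use that assms(2,5) r in auto)
    have "peak (merge_at e (r - 1)) r 1"
      using first unfolding peak_def merge_at_def r by (simp add: numeral_eq_Suc)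
    moreover have "peak (merge_at e (r - 1)) r (t + 3)"
      using last ascent[of "t + 2"] unfolding peak_def merge_at_def r
      by (simp add: numeral_eq_Suc max_def)
    ultimately have "twin_peaks (merge_at e (r - 1)) r"
      unfolding twin_peaks_def by (intro conjI exI[of _ "t + 3"]) simp_all
    then show ?thesis ..
  qed
qed

lemma merge_at_not_all_peaked_alike:
  assumes "3 \<le> r" "\<And>i. i < r \<Longrightarrow> e i \<noteq> e (Suc i)"
    and "\<And>j. j \<le> Suc r \<Longrightarrow> peaked (merge_at e j) r \<and> peak_parity (merge_at e j) r = c"
  shows False
proof -
  have drop_first: "merge_at e 0 = (\<lambda>i. e (Suc i))"
    by (simp add: merge_at_def fun_eq_iff)
  have drop_last: "merge_at e (Suc r) i = e i" if "i < r" for i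
    using that by (simp add: merge_at_def)
  have peaked_e: "peaked e r" and peaked_shift: "peaked (\<lambda>i. e (Suc i)) r"
    and parity: "peak_parity (\<lambda>i. e (Suc i)) r = peak_parity e r"
    using assms(3)[of 0] assms(3)[of "Suc r"] drop_first
      peaked_cong[OF drop_last] peak_parity_cong[OF drop_last] by auto
  obtain j where j: "peak e r j" using peaked_e unfolding peaked_def by blast
  define p where "p = first_peak e (Suc r)"
  have p: "peak e (Suc r) p" "\<And>j. j < p \<Longrightarrow> \<not> peak e (Suc r) j"
    unfolding p_def using peak_first_peak[OF peak_Suc[OF j]] not_peak_less_first_peak by auto
  have "p \<le> j" using p(2) peak_Suc[OF j] not_less by blast
  then have "Suc p < r" "0 < p" using j p(1) unfolding peak_def by auto
  \<comment> \<open>Dropping the first point moves the first peak one step left, flipping its parity,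
    unless it sits at position 1.\<close>
  show False
  proof (cases "p = 1")
    case True
    note ends = peaks_at_first_and_last[OF assms(1) p(1)[unfolded True] peaked_e peaked_shift parity]
    have "twin_peaks (merge_at e 2) r \<or> twin_peaks (merge_at e (r - 1)) r"
      using merge_at_twin_peaks[OF ends(1) assms(2) p(1)[unfolded True] ends(2,3)] by simp
    moreover have "peaked (merge_at e 2) r" "peaked (merge_at e (r - 1)) r"
      using assms(1) assms(3)[of 2] assms(3)[of "r - 1"] by simp_all
    ultimately show False unfolding peaked_def by blast
  next
    case False
    then have "2 \<le> p" using \<open>0 < p\<close> by simp
    then show False using peak_parity_drop_first_neq[OF p _ \<open>Suc p < r\<close>] parity by simp
  qed
qed

section \<open>Valleys\<close>

definition valley :: "(nat \<Rightarrow> nat) \<Rightarrow> nat \<Rightarrow> nat \<Rightarrow> bool" where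
  "valley e L c \<longleftrightarrow> c < L \<and> (\<forall>i j. i < j \<longrightarrow> j \<le> c \<longrightarrow> e j < e i)
     \<and> (\<forall>i j. c \<le> i \<longrightarrow> i < j \<longrightarrow> j < L \<longrightarrow> e i < e j)"

lemma valleyD:
  assumes "valley e L c"
  shows "c < L" "\<And>i j. i < j \<Longrightarrow> j \<le> c \<Longrightarrow> e j < e i"
    and "\<And>i j. c \<le> i \<Longrightarrow> i < j \<Longrightarrow> j < L \<Longrightarrow> e i < e j"
  using assms unfolding valley_def by blast+

lemma valley_if_no_peak:
  assumes "0 < L" "\<And>j. \<not> peak e L j" "\<And>i. Suc i < L \<Longrightarrow> e i \<noteq> e (Suc i)"
  shows "\<exists>c. valley e L c"
proof -
  define c where "c = (LEAST c. Suc c = L \<or> e c < e (Suc c))"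
  have last: "Suc (L - 1) = L \<or> e (L - 1) < e (Suc (L - 1))" using assms(1) by simp
  have c: "Suc c = L \<or> e c < e (Suc c)"
    unfolding c_def using last by (rule LeastI)
  have "c \<le> L - 1"
    unfolding c_def using last by (rule Least_le)
  have descent: "e (Suc i) < e i" if "i < c" for i
  proof -
    have "\<not> e i < e (Suc i)"
      using not_less_Least[OF that[unfolded c_def]] by blast
    moreover have "Suc i < L" using that \<open>c \<le> L - 1\<close> assms(1) by linarith
    then have "e i \<noteq> e (Suc i)" by (rule assms(3))
    ultimately show ?thesis by linarith
  qed
  have ascent: "e i < e (Suc i)" if "c \<le> i" "Suc i < L" for i
  proof (rule ascent_persists[of e c i L])
    show "e c < e (Suc c)" using c that by auto
  qed (use that assms(2,3) in auto)
  have "e j < e i" if "i < j" "j \<le> c" for i j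
    using that
  proof (induction i j rule: less_Suc_induct)
    case (1 i)
    then show ?case by (simp add: descent)
  next
    case (2 i j k)
    then show ?case by simp
  qed
  moreover have "e i < e j" if "c \<le> i" "i < j" "j < L" for i j
    by (rule lift_Suc_mono_less_ivl[of "{i. c \<le> i \<and> Suc i < L}"]) (use that ascent in auto)
  moreover have "c < L" using \<open>c \<le> L - 1\<close> assms(1) by simp
  ultimately have "valley e L c"
    unfolding valley_def by blast
  then show ?thesis ..
qed

lemma inj_on_valley:
  assumes "valley e L c"
    and "\<And>p q. p < q \<Longrightarrow> q < L \<Longrightarrow> e p = e q \<Longrightarrow> \<exists>l. p < l \<and> l < q \<and> e p < e l"
  shows "inj_on e {..<L}"
proof (rule linorder_inj_onI')
  fix p q assume "p \<in> {..<L}" "q \<in> {..<L}" "p < q"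
  show "e p \<noteq> e q"
  proof
    assume eq: "e p = e q"
    then obtain l where l: "p < l" "l < q" "e p < e l"
      using assms(2) \<open>p < q\<close> \<open>q \<in> {..<L}\<close> by blast
    show False
    proof (cases "l \<le> c")
      case True
      then show False using valleyD(2)[OF assms(1), of p l] l by simp
    next
      case False
      then show False using valleyD(3)[OF assms(1), of l q] l eq \<open>q \<in> {..<L}\<close> by simp
    qed
  qed
qed

lemma delta_valley_left:
  assumes "strict_mono_on {..m} b" "valley (delta_seq b) m c" "x < y" "y \<le> Suc c"
  shows "delta (b x) (b y) = delta_seq b x"
proof (rule delta_eq_local_max)
  show "mono_on {x..y} b"
    using valleyD(1)[OF assms(2)] assms(4)
    by (auto intro: mono_on_subset[OF strict_mono_on_imp_mono_on[OF assms(1)]])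
  show "delta_seq b l \<le> delta_seq b x" if "l \<in> {x..<y}" for l
    using that valleyD(2)[OF assms(2), of x l] assms(4) by (cases "l = x") auto
qed (use assms(3) in simp)

lemma delta_valley_right:
  assumes "strict_mono_on {..m} b" "valley (delta_seq b) m c" "c \<le> x" "x < y" "y \<le> m"
  shows "delta (b x) (b y) = delta_seq b (y - 1)"
proof (rule delta_eq_local_max)
  show "mono_on {x..y} b"
    using assms(5) by (auto intro: mono_on_subset[OF strict_mono_on_imp_mono_on[OF assms(1)]])
  show "delta_seq b l \<le> delta_seq b (y - 1)" if "l \<in> {x..<y}" for l
  proof (cases "l < y - 1")
    case True
    moreover have "y - 1 < m" using True assms(5) by linarith
    ultimately show ?thesis using that valleyD(3)[OF assms(2), of l "y - 1"] assms(3) by simp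
  next
    case False
    then have "l = y - 1" using that by auto
    then show ?thesis by simp
  qed
qed (use assms(4) in simp)

lemma inj_on_delta_seq_valley:
  assumes "strict_mono_on {..m} b" "valley (delta_seq b) m c"
  shows "inj_on (delta_seq b) {..<m}"
proof (rule inj_on_valley[OF assms(2)])
  fix p q assume "p < q" "q < m" "delta_seq b p = delta_seq b q"
  then show "\<exists>l. p < l \<and> l < q \<and> delta_seq b p < delta_seq b l"
    using assms(1) by (intro delta_exceeded_between) (auto intro: monotone_on_subset)
qed

lemma image_eq_if_interlaced:
  fixes p f :: "nat \<Rightarrow> 'a::linorder"
  assumes "strict_mono_on {..r} p" "finite Q" "card Q = r"
    and "\<And>t. t < r \<Longrightarrow> f t \<in> Q \<and> p t \<le> f t \<and> f t < p (Suc t)"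
  shows "f ` {..<r} = Q"
proof (rule card_subset_eq)
  have "strict_mono_on {..<r} f"
  proof (rule strict_mono_onI)
    fix s t assume "s \<in> {..<r}" "t \<in> {..<r}" "s < t"
    then have "p (Suc s) \<le> p t" by (auto intro: strict_mono_on_leD[OF assms(1)])
    then show "f s < f t" using assms(4)[of s] assms(4)[of t] \<open>s < t\<close> \<open>t \<in> {..<r}\<close> by force
  qed
  then show "card (f ` {..<r}) = card Q"
    using assms(3) by (simp add: card_image strict_mono_on_imp_inj_on)
qed (use assms(2,4) in auto)

lemma valley_index_set:
  assumes "c < m" "Q \<subseteq> {..<m}"
  obtains P where "P \<subseteq> {..m}" "finite P" "card P = Suc (card Q)" "Suc c \<in> P"
    and "\<And>z. z \<in> P \<Longrightarrow> z \<le> c \<Longrightarrow> z \<in> Q"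
    and "\<And>z. z \<in> P \<Longrightarrow> Suc c < z \<Longrightarrow> z - 1 \<in> Q"
proof
  define g where "g q = (if q \<le> c then q else Suc q)" for q
  let ?P = "insert (Suc c) (g ` Q)"
  have "finite Q" using assms(2) finite_subset by blast
  moreover have "inj_on g Q" unfolding g_def by (rule inj_onI) (simp split: if_splits)
  moreover have "Suc c \<notin> g ` Q" unfolding g_def by auto
  ultimately show "card ?P = Suc (card Q)" by (simp add: card_image)
  show "?P \<subseteq> {..m}" "finite ?P" using assms \<open>finite Q\<close> unfolding g_def by auto
  show "z \<in> Q" if "z \<in> ?P" "z \<le> c" for z using that unfolding g_def by auto
  show "z - 1 \<in> Q" if "z \<in> ?P" "Suc c < z" for z using that unfolding g_def by auto
qed simp

lemma delta_valley_realizes: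
  assumes "strict_mono_on {..m} b" "valley (delta_seq b) m c" "Q \<subseteq> {..<m}" "card Q = r"
  shows "\<exists>P \<subseteq> {..m}. card P = Suc r \<and> delta_seq (\<lambda>t. b (nth_elem P t)) ` {..<r} = delta_seq b ` Q"
proof -
  obtain P where P: "P \<subseteq> {..m}" "finite P" "card P = Suc r" "Suc c \<in> P"
    and low: "\<And>z. z \<in> P \<Longrightarrow> z \<le> c \<Longrightarrow> z \<in> Q"
    and high: "\<And>z. z \<in> P \<Longrightarrow> Suc c < z \<Longrightarrow> z - 1 \<in> Q"
    using valley_index_set[OF valleyD(1)[OF assms(2)] assms(3)] assms(4) by metis
  define p where "p = nth_elem P"
  have p_mono: "strict_mono_on {..r} p"
    unfolding p_def using strict_mono_on_nth_elem[OF P(2)] P(3) by (simp add: lessThan_Suc_atMost)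
  have p_in: "p t \<in> P" if "t \<le> r" for t
    unfolding p_def using nth_elem_in[OF P(2)] P(3) that by simp
  \<comment> \<open>Between consecutive chosen indices the largest gap is the left one below the valley
    and the right one above it.\<close>
  define f where "f t = (if p (Suc t) \<le> Suc c then p t else p (Suc t) - 1)" for t
  have f: "f t \<in> Q \<and> p t \<le> f t \<and> f t < p (Suc t) \<and> delta_seq (\<lambda>t. b (p t)) t = delta_seq b (f t)"
    if "t < r" for t
  proof -
    have lt: "p t < p (Suc t)" using that by (auto intro: strict_mono_onD[OF p_mono])
    have "p (Suc t) \<le> m" using p_in[of "Suc t"] P(1) that by auto
    have seq: "delta_seq (\<lambda>t. b (p t)) t = delta (b (p t)) (b (p (Suc t)))"
      by (simp add: delta_seq_def)
    show ?thesis
    proof (cases "p (Suc t) \<le> Suc c")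
      case True
      then have "p t \<in> Q" using low p_in lt that by simp
      then show ?thesis
        using lt True seq delta_valley_left[OF assms(1,2) lt True] unfolding f_def by simp
    next
      case False
      then have "Suc c \<le> p t"
        using nth_elem_consecutive[OF P(2), of t "Suc c"] P(3,4) that unfolding p_def by auto
      moreover have "p (Suc t) - 1 \<in> Q" using high p_in that False by simp
      ultimately show ?thesis
        using lt False seq delta_valley_right[OF assms(1,2) _ lt \<open>p (Suc t) \<le> m\<close>]
        unfolding f_def by simp
    qed
  qed
  have "f ` {..<r} = Q"
    using f assms(3) finite_subset by (intro image_eq_if_interlaced[OF p_mono _ assms(4)]) auto
  then have "delta_seq (\<lambda>t. b (p t)) ` {..<r} = delta_seq b ` Q"
    using f by (auto simp: image_iff)
  then show ?thesis using P unfolding p_def by blast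
qed

section \<open>The stepping-up colouring\<close>

lemma not_peaked_delta_seq_window:
  assumes "finite X" "a + Suc r \<le> card X"
    and unpeaked: "\<And>T. T \<subseteq> X \<Longrightarrow> card T = Suc r \<Longrightarrow> \<not> peaked (delta_seq (nth_elem T)) r"
  shows "\<not> peaked (\<lambda>t. delta_seq (nth_elem X) (a + t)) r"
proof -
  let ?P = "{a..<a + Suc r}"
  have P: "?P \<subseteq> {..<card X}" using assms(2) by auto
  have "card (nth_elem X ` ?P) = Suc r"
    using card_image_nth_elem[OF assms(1) P] by simp
  then have "\<not> peaked (delta_seq (nth_elem (nth_elem X ` ?P))) r"
    using unpeaked[OF image_nth_elem_subset[OF assms(1) P]] by blast
  moreover have "peaked (delta_seq (nth_elem (nth_elem X ` ?P))) r
      = peaked (\<lambda>t. delta_seq (nth_elem X) (a + t)) r"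
  proof (rule peaked_cong)
    fix i assume "i < r"
    then show "delta_seq (nth_elem (nth_elem X ` ?P)) i = delta_seq (nth_elem X) (a + i)"
      using delta_seq_image_nth_elem[OF assms(1) P, of i]
      by (simp add: nth_elem_atLeastLessThan delta_seq_def)
  qed
  ultimately show ?thesis by simp
qed

lemma no_peak_if_subsets_unpeaked:
  assumes "finite X" "3 \<le> r" "Suc (Suc r) \<le> card X"
    and unpeaked: "\<And>T. T \<subseteq> X \<Longrightarrow> card T = Suc r \<Longrightarrow> \<not> peaked (delta_seq (nth_elem T)) r"
  shows "\<not> peak (delta_seq (nth_elem X)) (card X - 1) j"
proof
  let ?e = "delta_seq (nth_elem X)"
  assume peak: "peak ?e (card X - 1) j"
  \<comment> \<open>The peak lies in a window of \<open>r + 1\<close> consecutive entries, the sequence of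
    \<open>r + 2\<close> consecutive points.\<close>
  define w where "w = min (j - 1) (card X - r - 2)"
  have j: "0 < j" "Suc j < card X - 1" "?e (j - 1) < ?e j" "?e (Suc j) < ?e j"
    using peak unfolding peak_def by auto
  have "w < j" unfolding w_def using j(1) by simp
  moreover have "j - w < r"
  proof (cases "j - 1 \<le> card X - r - 2")
    case True
    then show ?thesis unfolding w_def using j(1) assms(2) by simp
  next
    case False
    then show ?thesis unfolding w_def using j(1,2) by simp
  qed
  ultimately have w: "w < j" "j - w < r" by blast+
  then have "w + (j - w - 1) = j - 1" "w + (j - w) = j" "w + Suc (j - w) = Suc j"
    by simp_all
  then have "peak (\<lambda>t. ?e (w + t)) (Suc r) (j - w)"
    using j w unfolding peak_def by simp
  then have peaked: "peaked (\<lambda>t. ?e (w + Suc t)) r \<or> peaked (\<lambda>t. ?e (w + t)) r"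
    by (rule peaked_drop_first_or_last[OF assms(2)])
  have "Suc w + Suc r \<le> card X" using assms(3) unfolding w_def by simp
  then have "\<not> peaked (\<lambda>t. ?e (Suc w + t)) r"
    by (rule not_peaked_delta_seq_window[OF assms(1) _ unpeaked])
  moreover have "\<not> peaked (\<lambda>t. ?e (w + t)) r"
    by (rule not_peaked_delta_seq_window[OF assms(1) _ unpeaked])
      (use \<open>Suc w + Suc r \<le> card X\<close> in simp)
  ultimately show False using peaked by simp
qed

lemma valley_if_subsets_unpeaked:
  assumes "finite X" "3 \<le> r" "Suc (Suc r) \<le> card X"
    and "\<And>T. T \<subseteq> X \<Longrightarrow> card T = Suc r \<Longrightarrow> \<not> peaked (delta_seq (nth_elem T)) r"
  shows "\<exists>c. valley (delta_seq (nth_elem X)) (card X - 1) c"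
proof (rule valley_if_no_peak)
  show "\<not> peak (delta_seq (nth_elem X)) (card X - 1) j" for j
    using no_peak_if_subsets_unpeaked[OF assms] .
  show "delta_seq (nth_elem X) i \<noteq> delta_seq (nth_elem X) (Suc i)" if "Suc i < card X - 1" for i
    using that strict_mono_on_nth_elem[OF assms(1)] unfolding delta_seq_def
    by (intro delta_neq) (auto intro: strict_mono_onD)
qed (use assms(3) in simp)

lemma delta_set_realized:
  assumes "finite X" "valley (delta_seq (nth_elem X)) (card X - 1) c"
    and "S \<subseteq> delta_seq (nth_elem X) ` {..<card X - 1}" "card S = r"
  shows "\<exists>T \<subseteq> X. card T = Suc r \<and> delta_seq (nth_elem T) ` {..<r} = S"
proof -
  let ?b = "nth_elem X" and ?m = "card X - 1"
  have "card X \<noteq> 0" using assms(2) unfolding valley_def by auto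
  then have b: "strict_mono_on {..?m} ?b"
    using strict_mono_on_nth_elem[OF assms(1)] by (simp add: lessThan_Suc_atMost[symmetric])
  define Q where "Q = {q \<in> {..<?m}. delta_seq ?b q \<in> S}"
  have "delta_seq ?b ` Q = S" using assms(3) unfolding Q_def by auto
  moreover have "inj_on (delta_seq ?b) Q"
    using inj_on_delta_seq_valley[OF b assms(2)] unfolding Q_def by (rule inj_on_subset) auto
  ultimately have "card Q = r" using assms(4) card_image by fastforce
  then obtain P where P: "P \<subseteq> {..?m}" "card P = Suc r"
    and delta_P: "delta_seq (\<lambda>t. ?b (nth_elem P t)) ` {..<r} = S"
    using delta_valley_realizes[OF b assms(2), of Q r] \<open>delta_seq ?b ` Q = S\<close>
    unfolding Q_def by auto
  have P': "P \<subseteq> {..<card X}" using P(1) \<open>card X \<noteq> 0\<close> by auto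
  have "delta_seq (nth_elem (?b ` P)) ` {..<r} = S"
    using delta_P delta_seq_image_nth_elem[OF assms(1) P'] P(2) by (auto simp: image_iff)
  moreover have "?b ` P \<subseteq> X" "card (?b ` P) = Suc r"
    using image_nth_elem_subset[OF assms(1) P'] card_image_nth_elem[OF assms(1) P'] P(2) by simp_all
  ultimately show ?thesis by blast
qed

definition stepup_colouring :: "(nat set \<Rightarrow> nat) \<Rightarrow> nat \<Rightarrow> nat \<Rightarrow> nat set \<Rightarrow> nat" where
  "stepup_colouring \<chi> k r T =
     (if peaked (delta_seq (nth_elem T)) r then k + peak_parity (delta_seq (nth_elem T)) r
      else if \<chi> (delta_seq (nth_elem T) ` {..<r}) < k then \<chi> (delta_seq (nth_elem T) ` {..<r})
      else 0)"

lemma stepup_colouring_less: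
  assumes "3 \<le> r" "0 < k"
  shows "stepup_colouring \<chi> k r T < k + eta r"
proof -
  have "peak_parity e r < eta r" if peaked: "peaked e r" for e
  proof (cases "r = 3")
    case True
    obtain j where "peak e r j" using peaked unfolding peaked_def by blast
    then have "first_peak e r = 1"
      using peak_first_peak[of e r j] True unfolding peak_def by auto
    then show ?thesis using True by (simp add: peak_parity_def eta_def)
  next
    case False
    then have "2 \<le> eta r" by (simp add: eta_def)
    then show ?thesis by (simp add: peak_parity_def)
  qed
  then show ?thesis using assms(2) by (simp add: stepup_colouring_def)
qed

lemma stepup_colouring_ge:
  assumes "0 < k" "k \<le> stepup_colouring \<chi> k r T"
  shows "peaked (delta_seq (nth_elem T)) r"
    and "stepup_colouring \<chi> k r T = k + peak_parity (delta_seq (nth_elem T)) r"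
  using assms by (auto simp: stepup_colouring_def split: if_splits)

lemma stepup_monochromatic_old_colour:
  assumes "finite X" "X \<subseteq> {..<2 ^ n}" "3 \<le> r" "Suc (Suc r) \<le> card X" "i < k"
    and "\<And>S. S \<subseteq> {..<n} \<Longrightarrow> card S = r \<Longrightarrow> \<chi> S < k"
    and "monochromatic (stepup_colouring \<chi> k r) (Suc r) X i"
  shows "\<exists>D \<subseteq> {..<n}. card D = card X - 1 \<and> monochromatic \<chi> r D i"
proof -
  let ?e = "delta_seq (nth_elem X)"
  have colour: "stepup_colouring \<chi> k r T = i" if "T \<subseteq> X" "card T = Suc r" for T
    using assms(7) that unfolding monochromatic_def by blast
  have unpeaked: "\<not> peaked (delta_seq (nth_elem T)) r" if "T \<subseteq> X" "card T = Suc r" for T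
    using colour[OF that] assms(5) unfolding stepup_colouring_def by (auto split: if_splits)
  then obtain c where c: "valley ?e (card X - 1) c"
    using valley_if_subsets_unpeaked[OF assms(1,3,4)] by blast
  have b: "strict_mono_on {..card X - 1} (nth_elem X)"
    using strict_mono_on_nth_elem[OF assms(1)] assms(4)
    by (simp add: lessThan_Suc_atMost[symmetric])
  let ?D = "?e ` {..<card X - 1}"
  have "card ?D = card X - 1"
    using card_image[OF inj_on_delta_seq_valley[OF b c]] by simp
  moreover have "?D \<subseteq> {..<n}"
    using delta_seq_nth_elem_less[OF assms(1,2)] by auto
  moreover have "\<chi> S = i" if S: "S \<subseteq> ?D" "card S = r" for S
  proof -
    obtain T where T: "T \<subseteq> X" "card T = Suc r" "delta_seq (nth_elem T) ` {..<r} = S"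
      using delta_set_realized[OF assms(1) c S] by blast
    have "\<chi> S < k" using assms(6) S \<open>?D \<subseteq> {..<n}\<close> by blast
    then show ?thesis
      using colour[OF T(1,2)] unpeaked[OF T(1,2)] T(3) by (simp add: stepup_colouring_def)
  qed
  ultimately show ?thesis unfolding monochromatic_def by blast
qed

lemma stepup_not_monochromatic_new_colour:
  assumes "finite X" "card X = r + 2" "3 \<le> r" "0 < k" "k \<le> c"
  shows "\<not> monochromatic (stepup_colouring \<chi> k r) (Suc r) X c"
proof
  assume mono: "monochromatic (stepup_colouring \<chi> k r) (Suc r) X c"
  let ?e = "delta_seq (nth_elem X)"
  have "peaked (merge_at ?e j) r \<and> peak_parity (merge_at ?e j) r = c - k" if "j \<le> Suc r" for j
  proof -
    let ?T = "X - {nth_elem X j}"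
    have "nth_elem X j \<in> X" using nth_elem_in[OF assms(1)] that assms(2) by simp
    then have "?T \<subseteq> X" "card ?T = Suc r" using assms(1,2) by auto
    then have "stepup_colouring \<chi> k r ?T = c" using mono unfolding monochromatic_def by blast
    then have "peaked (delta_seq (nth_elem ?T)) r \<and> peak_parity (delta_seq (nth_elem ?T)) r = c - k"
      using stepup_colouring_ge[of k \<chi> r ?T] assms(4,5) by simp
    moreover have "delta_seq (nth_elem ?T) i = merge_at ?e j i" if "i < r" for i
      using delta_seq_remove[OF assms(1)] \<open>j \<le> Suc r\<close> that assms(2) by simp
    ultimately show ?thesis using peaked_cong peak_parity_cong by metis
  qed
  moreover have "?e i \<noteq> ?e (Suc i)" if "i < r" for i
    using that assms(2) strict_mono_on_nth_elem[OF assms(1)] unfolding delta_seq_def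
    by (intro delta_neq) (auto intro: strict_mono_onD)
  ultimately show False using merge_at_not_all_peaked_alike[OF assms(3)] by blast
qed

theorem theorem1p1:
  fixes k n r :: nat and s :: "nat \<Rightarrow> nat"
  assumes "k \<ge> 2" and "r \<ge> 3" and "n > r"
    and "\<And>i. i < k \<Longrightarrow> r + 1 \<le> s i \<and> s i \<le> n"
    and "\<not> arrows n s k r"
  shows "\<not> arrows (2 ^ n) (\<lambda>i. if i < k then s i + 1 else r + 2) (k + eta r) (r + 1)"
proof -
  obtain \<chi> where \<chi>: "\<forall>S. S \<subseteq> {..<n} \<and> card S = r \<longrightarrow> \<chi> S < k"
    and no_mono: "\<not> (\<exists>i<k. \<exists>D. D \<subseteq> {..<n} \<and> card D = s i \<and> monochromatic \<chi> r D i)"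
    using assms(5) unfolding arrows_def by blast
  let ?f = "stepup_colouring \<chi> k r"
  have "\<not> monochromatic ?f (r + 1) X i"
    if X: "X \<subseteq> {..<2 ^ n}" "card X = (if i < k then s i + 1 else r + 2)" for i X
  proof
    assume mono: "monochromatic ?f (r + 1) X i"
    have "finite X" using X(1) finite_subset by blast
    show False
    proof (cases "i < k")
      case True
      then have "Suc (Suc r) \<le> card X" using X(2) assms(4) by simp
      then show False
        using stepup_monochromatic_old_colour[OF \<open>finite X\<close> X(1) assms(2) _ True _ mono[simplified]]
          \<chi> no_mono X(2) True by auto
    next
      case False
      then show False
        using stepup_not_monochromatic_new_colour[OF \<open>finite X\<close> _ assms(2), of k i \<chi>] mono
          X(2) assms(1) by simp
    qed
  qed
  moreover have "?f T < k + eta r" for T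
    using stepup_colouring_less assms(1,2) by simp
  ultimately show ?thesis
    unfolding arrows_def by blast
qed

end
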